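(* Let $\phi_3(x)=\sqrt2\,\mathrm{sech}(x)$, $T(x)=\int_{\mathbb R}e^{-\sqrt2|x-y|}\mathrm{sech}^2(y)\,dy$, $R_1=-x\phi_3\phi_3'-\tfrac{1}{4\sqrt2}(3-\phi_3^2)T-\tfrac{\phi_3'}{2\sqrt2\phi_3}T'$, $R_2=\tfrac12\phi_3^2+\tfrac{3}{4\sqrt2}T+\tfrac{\phi_3'}{2\sqrt2\phi_3}T'$, $E=\tfrac12\phi_3(\tfrac14-\log\phi_3)+\tfrac12x\phi_3'$, $F=E+\phi_3\log\phi_3$, $\Delta_1=F(3(1-\phi_3^2)^2-1)+\phi_3(1-\phi_3^2)^2+6\phi_3(1-\phi_3^2)R_1-2\phi_3R_2$, $\Delta_2=F(1-\phi_3^2)+\phi_3R_1+\phi_3(1-\phi_3^2)R_2$, $h_{3,1}=\tfrac12\phi_3^2\cos x+\tfrac{\phi_3'}{\phi_3}\sin x$, $h_{3,2}=\tfrac{\phi_3'}{\phi_3}\sin x$, and with $\langle f,g\rangle=\int_{\mathbb R}fg\,dx$ set $\gamma_1=\langle\Delta_1,h_{3,1}\rangle$, $\gamma_2=2\langle\Delta_2,h_{3,2}\rangle$, $\gamma_3=\langle(6x\tanh x\,\mathrm{sech}^2x-\tfrac72\mathrm{sech}^2x)\phi_3(1-\phi_3^2),h_{3,1}\rangle$, $\gamma_4=-2\langle E,h_{3,1}\rangle$. For integers $k\ge1$ set (integrals over $\mathbb R$ in $x$) $p_k=\int\mathrm{sech}^k\cos$, $q_k=\int\mathrm{sech}^k\log(\mathrm{sech})\cos$,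 $r_k=\int\mathrm{sech}^kT\cos$, $s_k=\int\mathrm{sech}^kT\tanh\sin$, $a_k=\int x\,\mathrm{sech}^k\tanh\cos$. Then \begin{align*} \gamma_1=&\sqrt2\Big(2p_1+\big(-9\log2-\tfrac{97}{2}\big)p_3+(24\log2+110)p_5+\big(-15\log2-\tfrac{127}{2}\big)p_7\Big)\\ &+\sqrt2\big(q_1-19q_3+48q_5-30q_7-a_1+56a_3-222a_5+180a_7\big)\\ &+4r_1-4r_3-28r_5+30r_7+2s_1+22s_3-30s_5,\\ \gamma_2=&\sqrt2\Big(\big(\tfrac12\log2+\tfrac94\big)p_1+(-4\log2-6)p_3+(4\log2-18)p_5+24p_7\Big)\\ &+\sqrt2\big(q_1-8q_3+8q_5-a_1+21a_3-30a_5\big)+2r_3-2r_5-4s_3+10s_5,\\ \gamma_3=&\sqrt2\Big(-\tfrac{33}{2}p_3+\tfrac{127}{2}p_5-47p_7+18a_3-84a_5+72a_7\Big),\\ \gamma_4=&\sqrt2\big(q_1-q_3+a_1-2a_3\big). \end{align*}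
   Context: $\mathrm{sech},\tanh,\cos,\sin$ denote the functions $\mathrm{sech}(x),\tanh(x),\cos(x),\sin(x)$, products are pointwise, primes denote $d/dx$. *)

theory Defs
  imports "HOL-Analysis.Analysis"
begin

definition sech :: "real \<Rightarrow> real" where
  "sech x = 1 / cosh x"

definition phi3 :: "real \<Rightarrow> real" where
  "phi3 x = sqrt 2 * sech x"

definition T :: "real \<Rightarrow> real" where
  "T x = (LINT y|lborel. exp (- sqrt 2 * \<bar>x - y\<bar>) * (sech y)\<^sup>2)"

definition R1 :: "real \<Rightarrow> real" where
  "R1 x = - x * phi3 x * deriv phi3 x
          - 1 / (4 * sqrt 2) * (3 - (phi3 x)\<^sup>2) * T x
          - deriv phi3 x / (2 * sqrt 2 * phi3 x) * deriv T x"

definition R2 :: "real \<Rightarrow> real" where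
  "R2 x = 1/2 * (phi3 x)\<^sup>2 + 3 / (4 * sqrt 2) * T x
          + deriv phi3 x / (2 * sqrt 2 * phi3 x) * deriv T x"

definition E :: "real \<Rightarrow> real" where
  "E x = 1/2 * phi3 x * (1/4 - ln (phi3 x)) + 1/2 * x * deriv phi3 x"

definition F :: "real \<Rightarrow> real" where
  "F x = E x + phi3 x * ln (phi3 x)"

definition Delta1 :: "real \<Rightarrow> real" where
  "Delta1 x = F x * (3 * (1 - (phi3 x)\<^sup>2)\<^sup>2 - 1) + phi3 x * (1 - (phi3 x)\<^sup>2)\<^sup>2
              + 6 * phi3 x * (1 - (phi3 x)\<^sup>2) * R1 x - 2 * phi3 x * R2 x"

definition Delta2 :: "real \<Rightarrow> real" where
  "Delta2 x = F x * (1 - (phi3 x)\<^sup>2) + phi3 x * R1 x + phi3 x * (1 - (phi3 x)\<^sup>2) * R2 x"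

definition h31 :: "real \<Rightarrow> real" where
  "h31 x = 1/2 * (phi3 x)\<^sup>2 * cos x + deriv phi3 x / phi3 x * sin x"

definition h32 :: "real \<Rightarrow> real" where
  "h32 x = deriv phi3 x / phi3 x * sin x"

definition ip :: "(real \<Rightarrow> real) \<Rightarrow> (real \<Rightarrow> real) \<Rightarrow> real" where
  "ip f g = (LINT x|lborel. f x * g x)"

definition gamma1 :: real where "gamma1 = ip Delta1 h31"
definition gamma2 :: real where "gamma2 = 2 * ip Delta2 h32"
definition gamma3 :: real where
  "gamma3 = ip (\<lambda>x. (6 * x * tanh x * (sech x)\<^sup>2 - 7/2 * (sech x)\<^sup>2) * phi3 x * (1 - (phi3 x)\<^sup>2)) h31"
definition gamma4 :: real where "gamma4 = - 2 * ip E h31"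

definition pk :: "nat \<Rightarrow> real" where
  "pk k = (LINT x|lborel. sech x ^ k * cos x)"
definition qk :: "nat \<Rightarrow> real" where
  "qk k = (LINT x|lborel. sech x ^ k * ln (sech x) * cos x)"
definition rk :: "nat \<Rightarrow> real" where
  "rk k = (LINT x|lborel. sech x ^ k * T x * cos x)"
definition sk :: "nat \<Rightarrow> real" where
  "sk k = (LINT x|lborel. sech x ^ k * T x * tanh x * sin x)"
definition ak :: "nat \<Rightarrow> real" where
  "ak k = (LINT x|lborel. x * sech x ^ k * tanh x * cos x)"

end

theory Submission
  imports Defs "HOL-Probability.Sinc_Integral"
begin

lemma sech_pos: "sech x > 0"
  by (simp add: sech_def)

lemma sech_neq_0 [simp]: "sech x \<noteq> 0"
  using sech_pos[of x] by linarith

lemma sech_le_1: "sech x \<le> 1"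
  using cosh_real_ge_1[of x] by (simp add: sech_def)

lemma tanh_sech_squared_add: "tanh x ^ 2 + sech x ^ 2 = 1"
proof -
  have "tanh x ^ 2 + sech x ^ 2 = (sinh x ^ 2 + 1) / cosh x ^ 2"
    by (simp add: tanh_def sech_def power_divide add_divide_distrib)
  also have "\<dots> = 1"
    by (simp flip: cosh_square_eq)
  finally show ?thesis .
qed

lemma abs_tanh_le_1: "\<bar>tanh x\<bar> \<le> (1::real)"
  using tanh_real_bounds[of x] by auto

lemma abs_ln_sech_le: "\<bar>ln (sech x)\<bar> \<le> \<bar>x\<bar>"
proof -
  have "cosh x \<le> exp \<bar>x\<bar>"
    by (cases "x \<ge> 0") (auto simp: cosh_def)
  moreover have "1 \<le> cosh x"
    by (rule cosh_real_ge_1)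
  ultimately have "0 \<le> ln (cosh x)" "ln (cosh x) \<le> \<bar>x\<bar>"
    by (auto simp flip: ln_le_cancel_iff[of _ "exp \<bar>x\<bar>"])
  then show ?thesis
    by (simp add: sech_def ln_div)
qed

lemma has_real_derivative_sech [derivative_intros]:
  "(sech has_real_derivative - sech x * tanh x) (at x)"
  unfolding sech_def [abs_def]
  by (auto intro!: derivative_eq_intros simp: sech_def tanh_def power2_eq_square)

lemma continuous_on_sech [continuous_intros]:
  "continuous_on S f \<Longrightarrow> continuous_on S (\<lambda>x. sech (f x))"
  unfolding sech_def by (intro continuous_intros) auto

lemma has_real_derivative_sech_power [derivative_intros]:
  "((\<lambda>x. sech x ^ k) has_real_derivative - real k * sech x ^ k * tanh x) (at x)"
proof (cases k)
  case (Suc n)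
  show ?thesis
    by (rule derivative_eq_intros refl)+ (simp add: Suc algebra_simps)
qed simp

lemma has_real_derivative_ln_sech [derivative_intros]:
  "((\<lambda>x. ln (sech x)) has_real_derivative - tanh x) (at x)"
  by (rule derivative_eq_intros refl sech_pos)+ (use sech_pos[of x] in simp)

lemma one_plus_cube_le_exp: "(1 + y) ^ 3 \<le> 27 * exp y" if "y \<ge> 0" for y :: real
proof -
  have "(1 + y) ^ 3 \<le> (3 * (1 + y / 3)) ^ 3"
    using that by (intro power_mono) auto
  also have "\<dots> = 27 * (1 + y / 3) ^ 3"
    by (simp only: power_mult_distrib) simp
  also have "(1 + y / 3) ^ 3 \<le> exp (y / 3) ^ 3"
    using exp_ge_add_one_self[of "y / 3"] that by (intro power_mono) auto
  also have "\<dots> = exp y"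
    by (simp flip: exp_of_nat_mult)
  finally show ?thesis
    by simp
qed

lemma one_plus_abs_mult_sech_le: "(1 + \<bar>x\<bar>) * sech x \<le> 54 / (1 + x ^ 2)"
proof -
  have "exp \<bar>x\<bar> \<le> 2 * cosh x"
    by (cases "x \<ge> 0") (auto simp: cosh_def)
  then have "(1 + \<bar>x\<bar>) ^ 3 * sech x \<le> 54"
    using one_plus_cube_le_exp[of "\<bar>x\<bar>"] cosh_real_pos[of x]
    by (auto simp: sech_def field_simps)
  moreover have "(1 + \<bar>x\<bar>) * sech x * (1 + x ^ 2) \<le> (1 + \<bar>x\<bar>) * sech x * (1 + \<bar>x\<bar>) ^ 2"
    using sech_pos[of x] by (intro mult_left_mono) (auto simp: power2_eq_square algebra_simps)
  moreover have "(1 + \<bar>x\<bar>) * sech x * (1 + \<bar>x\<bar>) ^ 2 = (1 + \<bar>x\<bar>) ^ 3 * sech x"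
    by (simp add: power2_eq_square power3_eq_cube)
  ultimately show ?thesis
    by (simp add: pos_le_divide_eq add_pos_nonneg)
qed

definition linear_growth :: "(real \<Rightarrow> real) \<Rightarrow> bool" where
  "linear_growth v \<longleftrightarrow> continuous_on UNIV v \<and> (\<exists>C. \<forall>x. \<bar>v x\<bar> \<le> C * (1 + \<bar>x\<bar>))"

lemma linear_growth_bounded:
  assumes "continuous_on UNIV b" "bounded (range b)"
  shows "linear_growth b"
proof -
  obtain B where B: "\<And>x. \<bar>b x\<bar> \<le> B"
    using assms(2) by (auto simp: bounded_iff)
  have "B \<ge> 0"
    using B[of 0] abs_ge_zero order_trans by blast
  then have "\<bar>b x\<bar> \<le> B * (1 + \<bar>x\<bar>)" for x
    using B[of x] mult_left_mono[of 1 "1 + \<bar>x\<bar>" B] by simp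
  then show ?thesis
    using assms(1) by (auto simp: linear_growth_def)
qed

lemma linear_growth_ident [simp]: "linear_growth (\<lambda>x. x)"
  by (auto simp: linear_growth_def intro!: exI[of _ 1])

lemma linear_growth_ln_sech [simp]: "linear_growth (\<lambda>x. ln (sech x))"
proof -
  have "continuous_on UNIV (\<lambda>x. ln (sech x))"
    by (intro continuous_intros) auto
  moreover have "\<bar>ln (sech x)\<bar> \<le> 1 * (1 + \<bar>x\<bar>)" for x
    using abs_ln_sech_le[of x] by simp
  ultimately show ?thesis
    unfolding linear_growth_def by blast
qed

lemma abs_sech_power_mult_le:
  assumes "k \<ge> 1" "\<bar>v x\<bar> \<le> C * (1 + \<bar>x\<bar>)"
  shows "\<bar>sech x ^ k * v x\<bar> \<le> C * (54 / (1 + x ^ 2))"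
proof -
  have "C \<ge> 0"
  proof -
    have "0 \<le> C * (1 + \<bar>x\<bar>)"
      using assms(2) abs_ge_zero order_trans by blast
    then show ?thesis
      using abs_ge_zero[of x] by (auto simp: zero_le_mult_iff)
  qed
  have "sech x ^ k \<le> sech x"
    using power_decreasing[of 1 k "sech x"] assms(1) sech_pos[of x] sech_le_1[of x] by simp
  then have "\<bar>sech x ^ k * v x\<bar> \<le> sech x * (C * (1 + \<bar>x\<bar>))"
    using assms(2) sech_pos[of x] by (simp add: abs_mult mult_mono')
  also have "\<dots> = C * ((1 + \<bar>x\<bar>) * sech x)"
    by simp
  also have "\<dots> \<le> C * (54 / (1 + x ^ 2))"
    using \<open>C \<ge> 0\<close> by (rule mult_left_mono[OF one_plus_abs_mult_sech_le])
  finally show ?thesis .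
qed

lemma integrable_sech_power_mult:
  assumes "k \<ge> 1" "linear_growth v"
  shows "integrable lborel (\<lambda>x. sech x ^ k * v x)"
proof -
  obtain C where cont: "continuous_on UNIV v" and C: "\<And>x. \<bar>v x\<bar> \<le> C * (1 + \<bar>x\<bar>)"
    using assms(2) unfolding linear_growth_def by blast
  have "integrable lborel (\<lambda>x. C * (54 * inverse (1 + x ^ 2)))"
    using integrable_inverse_1_plus_square by (simp add: set_integrable_def)
  moreover have "continuous_on UNIV (\<lambda>x. sech x ^ k * v x)"
    by (intro continuous_intros cont)
  then have "(\<lambda>x. sech x ^ k * v x) \<in> borel_measurable lborel"
    by (simp add: borel_measurable_continuous_onI)
  moreover have "norm (sech x ^ k * v x) \<le> norm (C * (54 * inverse (1 + x ^ 2)))" for x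
    using abs_sech_power_mult_le[of k v x C, OF assms(1) C] by (simp add: divide_inverse)
  ultimately show ?thesis
    by (rule Bochner_Integration.integrable_bound[OF _ _ AE_I2])
qed

lemma tendsto_sech_power_mult:
  assumes "k \<ge> 1" "linear_growth v"
  shows "((\<lambda>x. sech x ^ k * v x) \<longlongrightarrow> 0) at_top" "((\<lambda>x. sech x ^ k * v x) \<longlongrightarrow> 0) at_bot"
proof -
  obtain C where C: "\<And>x. \<bar>v x\<bar> \<le> C * (1 + \<bar>x\<bar>)"
    using assms(2) unfolding linear_growth_def by blast
  have bound: "norm (sech x ^ k * v x) \<le> C * (54 / (1 + x ^ 2))" for x
    using abs_sech_power_mult_le[of k v x C, OF assms(1) C] by simp
  have top: "filterlim (\<lambda>x::real. 1 + x ^ 2) at_top at_top"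
    by (intro filterlim_tendsto_add_at_top[OF tendsto_const] filterlim_pow_at_top filterlim_ident) auto
  have bot: "filterlim (\<lambda>x::real. 1 + x ^ 2) at_top at_bot"
    by (intro filterlim_tendsto_add_at_top[OF tendsto_const] filterlim_pow_at_bot_even filterlim_ident) auto
  show "((\<lambda>x. sech x ^ k * v x) \<longlongrightarrow> 0) at_top"
    by (rule Lim_null_comparison[OF always_eventually[OF allI[OF bound]] tendsto_mult_right_zero[OF
          tendsto_divide_0[OF tendsto_const filterlim_mono[OF top at_top_le_at_infinity order_refl]]]])
  show "((\<lambda>x. sech x ^ k * v x) \<longlongrightarrow> 0) at_bot"
    by (rule Lim_null_comparison[OF always_eventually[OF allI[OF bound]] tendsto_mult_right_zero[OF
          tendsto_divide_0[OF tendsto_const filterlim_mono[OF bot at_top_le_at_infinity order_refl]]]])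
qed

lemma integral_eq_0_if_antiderivative_vanishes:
  fixes G g :: "real \<Rightarrow> real"
  assumes "\<And>x. (G has_real_derivative g x) (at x)" "continuous_on UNIV g" "integrable lborel g"
    "(G \<longlongrightarrow> 0) at_bot" "(G \<longlongrightarrow> 0) at_top"
  shows "integral\<^sup>L lborel g = 0"
proof -
  have "(LBINT x=-\<infinity>..\<infinity>. g x) = 0 - 0"
  proof (rule interval_integral_FTC_integrable)
    show "(G has_vector_derivative g x) (at x)" for x
      using assms(1) by (simp add: has_real_derivative_iff_has_vector_derivative)
    show "isCont g x" for x
      using assms(2) by (simp add: continuous_on_eq_continuous_at)
    show "set_integrable lborel (einterval (-\<infinity>) \<infinity>) g"
      using assms(3) by (simp add: set_integrable_def einterval_eq_UNIV)
    show "((G \<circ> real_of_ereal) \<longlongrightarrow> 0) (at_right (-\<infinity>))"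
      unfolding ereal_tendsto_simps1 by (rule assms(4))
    show "((G \<circ> real_of_ereal) \<longlongrightarrow> 0) (at_left \<infinity>)"
      unfolding ereal_tendsto_simps1 by (rule assms(5))
  qed simp
  then show ?thesis
    by (simp add: interval_lebesgue_integral_def set_lebesgue_integral_def einterval_eq_UNIV)
qed

lemma linear_growth_mult_bounded [simp]:
  assumes "linear_growth u" "continuous_on UNIV b" "bounded (range b)"
  shows "linear_growth (\<lambda>x. u x * b x)" "linear_growth (\<lambda>x. b x * u x)"
proof -
  obtain C where C: "\<And>x. \<bar>u x\<bar> \<le> C * (1 + \<bar>x\<bar>)" and "continuous_on UNIV u"
    using assms(1) unfolding linear_growth_def by blast
  obtain B where B: "\<And>x. \<bar>b x\<bar> \<le> B"
    using assms(3) by (auto simp: bounded_iff)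
  have "\<bar>u x * b x\<bar> \<le> (C * B) * (1 + \<bar>x\<bar>)" for x
  proof -
    have "\<bar>u x\<bar> * \<bar>b x\<bar> \<le> C * (1 + \<bar>x\<bar>) * B"
      using C[of x] B[of x] abs_ge_zero order_trans by (blast intro: mult_mono)
    then show ?thesis
      by (simp add: abs_mult ac_simps)
  qed
  moreover have "continuous_on UNIV (\<lambda>x. u x * b x)"
    by (intro continuous_intros \<open>continuous_on UNIV u\<close> assms(2))
  ultimately show "linear_growth (\<lambda>x. u x * b x)" "linear_growth (\<lambda>x. b x * u x)"
    unfolding linear_growth_def by (auto simp: mult.commute)
qed

lemma bounded_range_sin [simp]: "bounded (range (sin :: real \<Rightarrow> real))"
  by (auto simp: bounded_iff intro!: exI[of _ 1])

lemma bounded_range_cos [simp]: "bounded (range (cos :: real \<Rightarrow> real))"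
  by (auto simp: bounded_iff intro!: exI[of _ 1])

lemma bounded_range_tanh [simp]: "bounded (range (tanh :: real \<Rightarrow> real))"
  using abs_tanh_le_1 by (auto simp: bounded_iff)

definition sech_integral :: "nat \<Rightarrow> (real \<Rightarrow> real) \<Rightarrow> real" where
  "sech_integral k v = (LINT x|lborel. sech x ^ k * v x)"

definition sech_series :: "(real \<times> nat \<times> (real \<Rightarrow> real)) list \<Rightarrow> real \<Rightarrow> real" where
  "sech_series L x = (\<Sum>(c, k, v)\<leftarrow>L. c * (sech x ^ k * v x))"

definition admissible :: "(real \<times> nat \<times> (real \<Rightarrow> real)) list \<Rightarrow> bool" where
  "admissible L \<longleftrightarrow> (\<forall>(c, k, v)\<in>set L. k \<ge> 1 \<and> linear_growth v)"

lemma sech_series_Nil [simp]: "sech_series [] = (\<lambda>x. 0)"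
  and sech_series_Cons [simp]:
    "sech_series ((c, k, v) # L) = (\<lambda>x. c * (sech x ^ k * v x) + sech_series L x)"
  by (simp_all add: sech_series_def fun_eq_iff)

lemma admissible_Nil [simp]: "admissible []"
  and admissible_Cons [simp]: "admissible ((c, k, v) # L) \<longleftrightarrow> k \<ge> 1 \<and> linear_growth v \<and> admissible L"
  by (simp_all add: admissible_def)

lemma continuous_on_sech_series: "admissible L \<Longrightarrow> continuous_on UNIV (sech_series L)"
  by (induction L) (auto simp: split_paired_all linear_growth_def intro!: continuous_intros)

lemma integrable_sech_series: "admissible L \<Longrightarrow> integrable lborel (sech_series L)"
  by (induction L) (auto simp: split_paired_all intro!: Bochner_Integration.integrable_add integrable_mult_right integrable_sech_power_mult)

lemma integral_sech_series:
  "admissible L \<Longrightarrow> integral\<^sup>L lborel (sech_series L) = (\<Sum>(c, k, v)\<leftarrow>L. c * sech_integral k v)"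
  by (induction L) (auto simp: split_paired_all sech_integral_def integrable_sech_series integrable_sech_power_mult)

lemma sech_series_integral_eq_0:
  assumes "admissible L" "k \<ge> 1" "linear_growth u"
    and "\<And>x. ((\<lambda>x. sech x ^ k * u x) has_real_derivative sech_series L x) (at x)"
  shows "(\<Sum>(c, k, v)\<leftarrow>L. c * sech_integral k v) = 0"
  using integral_eq_0_if_antiderivative_vanishes[OF assms(4) continuous_on_sech_series[OF assms(1)]
      integrable_sech_series[OF assms(1)] tendsto_sech_power_mult(2,1)[OF assms(2,3)]]
  by (simp add: integral_sech_series[OF assms(1)])

definition convolve :: "(real \<Rightarrow> real) \<Rightarrow> (real \<Rightarrow> real) \<Rightarrow> real \<Rightarrow> real" where
  "convolve w g x = (LINT u|lborel. w u * g (x - u))"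

lemma abs_convolve_integrand_le:
  fixes w g :: "real \<Rightarrow> real"
  assumes "\<And>y. \<bar>g y\<bar> \<le> B"
  shows "\<bar>w u * g (x - u)\<bar> \<le> B * \<bar>w u\<bar>"
  using mult_left_mono[OF assms[of "x - u"] abs_ge_zero[of "w u"]] by (simp add: abs_mult mult.commute)

lemma integrable_convolve_integrand:
  fixes w g :: "real \<Rightarrow> real"
  assumes "integrable lborel w" "continuous_on UNIV g" "\<And>y. \<bar>g y\<bar> \<le> B"
  shows "integrable lborel (\<lambda>u. w u * g (x - u))"
proof (rule Bochner_Integration.integrable_bound[OF _ _ AE_I2])
  show "integrable lborel (\<lambda>u. B * \<bar>w u\<bar>)"
    using assms(1) by simp
  have "continuous_on UNIV (\<lambda>u. g (x - u))"
    by (intro continuous_on_compose2[OF assms(2)] continuous_intros) auto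
  then have "(\<lambda>u. g (x - u)) \<in> borel_measurable lborel"
    by (simp add: borel_measurable_continuous_onI)
  then show "(\<lambda>u. w u * g (x - u)) \<in> borel_measurable lborel"
    by (rule borel_measurable_times[OF borel_measurable_integrable[OF assms(1)]])
qed (unfold real_norm_def, rule order_trans[OF abs_convolve_integrand_le[OF assms(3)] abs_ge_self])

lemma abs_convolve_le:
  assumes "integrable lborel w" "continuous_on UNIV g" "\<And>y. \<bar>g y\<bar> \<le> B"
  shows "\<bar>convolve w g x\<bar> \<le> B * (LINT u|lborel. \<bar>w u\<bar>)"
proof -
  have "\<bar>convolve w g x\<bar> \<le> (LINT u|lborel. \<bar>w u * g (x - u)\<bar>)"
    unfolding convolve_def using integral_norm_bound[of lborel "\<lambda>u. w u * g (x - u)"] by simp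
  also have "\<dots> \<le> (LINT u|lborel. B * \<bar>w u\<bar>)"
    using assms(1) integrable_convolve_integrand[OF assms]
    by (intro integral_mono abs_convolve_integrand_le[OF assms(3)]) simp_all
  finally show ?thesis
    by simp
qed

lemma continuous_on_if_lipschitz:
  fixes f :: "real \<Rightarrow> real"
  assumes "\<And>y z. \<bar>f y - f z\<bar> \<le> M * \<bar>y - z\<bar>"
  shows "continuous_on UNIV f"
proof (rule lipschitz_on_continuous_on)
  show "M-lipschitz_on UNIV f"
    using assms assms[of 1 0] by (intro lipschitz_onI) (auto simp: dist_real_def)
qed

lemma abs_taylor_remainder_le:
  fixes g g' :: "real \<Rightarrow> real"
  assumes "\<And>y. (g has_real_derivative g' y) (at y)" "\<And>y z. \<bar>g' y - g' z\<bar> \<le> M * \<bar>y - z\<bar>"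
  shows "\<bar>g (y + h) - g y - h * g' y\<bar> \<le> M * h ^ 2"
proof -
  have "norm (g (y + h) - g y - (y + h - y) *\<^sub>R g' y) \<le> norm (y + h - y) * (M * \<bar>h\<bar>)"
  proof (rule vector_differentiable_bound_linearization[where S = "closed_segment y (y + h)" and f' = g' and ?x0.0 = y])
    show "(g has_vector_derivative g' z) (at z within closed_segment y (y + h))"
      if "z \<in> closed_segment y (y + h)" for z
      using assms(1)[of z] by (simp add: has_real_derivative_iff_has_vector_derivative has_vector_derivative_at_within)
    show "norm (g' z - g' y) \<le> M * \<bar>h\<bar>" if "z \<in> closed_segment y (y + h)" for z
    proof -
      have "\<bar>g' 1 - g' 0\<bar> \<le> M"
        using assms(2)[of 1 0] by simp
      then have "0 \<le> M"
        by (rule order_trans[OF abs_ge_zero])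
      moreover have "\<bar>z - y\<bar> \<le> \<bar>h\<bar>"
        using that by (auto simp: closed_segment_eq_real_ivl split: if_splits)
      ultimately show ?thesis
        using assms(2)[of z y] mult_left_mono[of "\<bar>z - y\<bar>" "\<bar>h\<bar>" M] by simp
    qed
  qed auto
  then show ?thesis
    by (simp add: power2_eq_square abs_mult mult_ac)
qed

lemma continuous_on_shift:
  fixes g :: "real \<Rightarrow> real"
  shows "continuous_on UNIV g \<Longrightarrow> continuous_on UNIV (\<lambda>z. g (z + a))"
  by (rule continuous_on_compose2[of UNIV g UNIV "\<lambda>z. z + a"]) (auto intro: continuous_intros)

lemma convolve_shift_diff:
  fixes w g h :: "real \<Rightarrow> real"
  assumes "integrable lborel w" "continuous_on UNIV g" "\<And>y. \<bar>g y\<bar> \<le> B"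
    "continuous_on UNIV h" "\<And>y. \<bar>h y\<bar> \<le> C"
  shows "convolve w (\<lambda>z. g (z + a) - g z - c * h z) x = convolve w g (x + a) - convolve w g x - c * convolve w h x"
proof -
  have "integrable lborel (\<lambda>u. w u * g (y - u))" "integrable lborel (\<lambda>u. w u * h (y - u))" for y
    using integrable_convolve_integrand assms by blast+
  then show ?thesis
    by (simp add: convolve_def algebra_simps)
qed

lemma convolve_lipschitz:
  fixes w g :: "real \<Rightarrow> real"
  assumes "integrable lborel w" "\<And>y. \<bar>g y\<bar> \<le> B" "\<And>y z. \<bar>g y - g z\<bar> \<le> M * \<bar>y - z\<bar>"
  shows "\<bar>convolve w g x - convolve w g y\<bar> \<le> M * (LINT u|lborel. \<bar>w u\<bar>) * \<bar>x - y\<bar>"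
proof -
  have cont: "continuous_on UNIV g"
    using assms(3) by (rule continuous_on_if_lipschitz)
  have "convolve w g x - convolve w g y = convolve w (\<lambda>z. g (z + (x - y)) - g z) y"
    using convolve_shift_diff[OF assms(1) cont assms(2) cont assms(2), of "x - y" 0 y] by simp
  also have "\<bar>\<dots>\<bar> \<le> (M * \<bar>x - y\<bar>) * (LINT u|lborel. \<bar>w u\<bar>)"
  proof (rule abs_convolve_le[OF assms(1)])
    show "continuous_on UNIV (\<lambda>z. g (z + (x - y)) - g z)"
      using continuous_on_shift[OF cont] cont by (rule continuous_on_diff)
    show "\<bar>g (z + (x - y)) - g z\<bar> \<le> M * \<bar>x - y\<bar>" for z
      using assms(3)[of "z + (x - y)" z] by simp
  qed
  finally show ?thesis
    by (simp add: ac_simps)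
qed

lemma has_real_derivative_convolve:
  fixes w g g' :: "real \<Rightarrow> real"
  assumes w: "integrable lborel w"
    and g: "\<And>y. (g has_real_derivative g' y) (at y)" "\<And>y. \<bar>g y\<bar> \<le> B" "\<And>y. \<bar>g' y\<bar> \<le> B'"
      "\<And>y z. \<bar>g' y - g' z\<bar> \<le> M * \<bar>y - z\<bar>"
  shows "(convolve w g has_real_derivative convolve w g' x) (at x)"
proof -
  define W where "W = (LINT u|lborel. \<bar>w u\<bar>)"
  have cont: "continuous_on UNIV g" "continuous_on UNIV g'"
    using g(1) continuous_on_if_lipschitz[OF g(4)]
    by (auto intro: DERIV_continuous_on)
  have remainder: "\<bar>convolve w g (x + h) - convolve w g x - h * convolve w g' x\<bar> \<le> M * h ^ 2 * W" for h
  proof -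
    have "convolve w g (x + h) - convolve w g x - h * convolve w g' x
        = convolve w (\<lambda>z. g (z + h) - g z - h * g' z) x"
      using convolve_shift_diff[OF w cont(1) g(2) cont(2) g(3)] by simp
    also have "\<bar>\<dots>\<bar> \<le> M * h ^ 2 * W"
      unfolding W_def
    proof (rule abs_convolve_le[OF w])
      show "continuous_on UNIV (\<lambda>z. g (z + h) - g z - h * g' z)"
        using continuous_on_shift[OF cont(1)] cont by (intro continuous_on_diff continuous_on_mult_left)
      show "\<bar>g (z + h) - g z - h * g' z\<bar> \<le> M * h ^ 2" for z
        by (rule abs_taylor_remainder_le[OF g(1,4)])
    qed
    finally show ?thesis .
  qed
  have "((\<lambda>h. (convolve w g (x + h) - convolve w g x) / h - convolve w g' x) \<longlongrightarrow> 0) (at 0)"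
  proof (rule Lim_null_comparison)
    show "\<forall>\<^sub>F h in at 0. norm ((convolve w g (x + h) - convolve w g x) / h - convolve w g' x) \<le> M * W * \<bar>h\<bar>"
    proof (rule eventually_at_filter[THEN iffD2, OF always_eventually], intro allI impI)
      fix h :: real
      assume "h \<noteq> 0"
      then have "(convolve w g (x + h) - convolve w g x) / h - convolve w g' x
          = (convolve w g (x + h) - convolve w g x - h * convolve w g' x) / h"
        by (simp add: field_simps)
      also have "\<bar>\<dots>\<bar> \<le> M * h ^ 2 * W / \<bar>h\<bar>"
        using remainder[of h] by (simp add: divide_right_mono)
      also have "\<dots> = M * W * \<bar>h\<bar>"
        using \<open>h \<noteq> 0\<close> by (simp add: field_simps power2_eq_square)
      finally show "norm ((convolve w g (x + h) - convolve w g x) / h - convolve w g' x) \<le> M * W * \<bar>h\<bar>"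
        by simp
    qed
    show "((\<lambda>h. M * W * \<bar>h\<bar>) \<longlongrightarrow> 0) (at 0)"
      by (intro tendsto_mult_right_zero tendsto_rabs_zero tendsto_ident_at)
  qed
  then show ?thesis
    unfolding DERIV_def by (rule LIM_zero_cancel)
qed

lemma integrable_exp_neg_abs:
  fixes c :: real
  assumes "c \<ge> 1"
  shows "integrable lborel (\<lambda>u. exp (- c * \<bar>u\<bar>))"
proof -
  have "integrable lborel (\<lambda>u. sech u ^ 1 * 1)"
    by (intro integrable_sech_power_mult linear_growth_bounded) auto
  moreover have "continuous_on UNIV (\<lambda>u. exp (- c * \<bar>u\<bar>))"
    by (intro continuous_intros)
  then have "(\<lambda>u. exp (- c * \<bar>u\<bar>)) \<in> borel_measurable lborel"
    by (simp add: borel_measurable_continuous_onI)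
  moreover have "norm (exp (- c * \<bar>u\<bar>)) \<le> norm (sech u ^ 1 * 1)" for u
  proof -
    have "cosh u \<le> exp \<bar>u\<bar>"
      by (cases "u \<ge> 0") (auto simp: cosh_def)
    then have "exp (- \<bar>u\<bar>) \<le> sech u"
      using cosh_real_pos[of u] by (simp add: sech_def exp_minus field_simps)
    moreover have "exp (- c * \<bar>u\<bar>) \<le> exp (- \<bar>u\<bar>)"
      using mult_right_mono[OF assms abs_ge_zero[of u]] by simp
    ultimately have "exp (- c * \<bar>u\<bar>) \<le> sech u"
      by (rule order_trans[rotated])
    then show ?thesis
      using sech_pos[of u] by simp
  qed
  ultimately show ?thesis
    by (rule Bochner_Integration.integrable_bound[OF _ _ AE_I2])
qed

lemma T_eq_convolve: "T = convolve (\<lambda>u. exp (- sqrt 2 * \<bar>u\<bar>)) (\<lambda>y. sech y ^ 2)"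
proof
  fix x
  have "T x = \<bar>-1\<bar> *\<^sub>R (LINT u|lborel. exp (- sqrt 2 * \<bar>x - (x + -1 * u)\<bar>) * (sech (x + -1 * u))\<^sup>2)"
    unfolding T_def by (rule lborel_integral_real_affine) simp
  then show "T x = convolve (\<lambda>u. exp (- sqrt 2 * \<bar>u\<bar>)) (\<lambda>y. sech y ^ 2) x"
    by (simp add: convolve_def)
qed

lemma tanh_squared: "tanh x ^ 2 = 1 - sech x ^ 2"
  using tanh_sech_squared_add[of x] by simp

lemma has_real_derivative_sech_squared_tanh:
  "((\<lambda>y. - 2 * sech y ^ 2 * tanh y) has_real_derivative 4 * sech y ^ 2 * tanh y ^ 2 - 2 * sech y ^ 4) (at y)"
  by (rule derivative_eq_intros refl cosh_real_nonzero)+ (use tanh_sech_squared_add[of y] in \<open>simp, algebra\<close>)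

lemma abs_sech_squared_tanh_deriv_le: "\<bar>4 * sech y ^ 2 * tanh y ^ 2 - 2 * sech y ^ 4\<bar> \<le> 6"
proof -
  have "sech y ^ 2 \<le> 1" "sech y ^ 4 \<le> 1"
    using sech_pos[of y] sech_le_1[of y] by (auto intro: power_le_one)
  moreover have "tanh y ^ 2 \<le> 1"
    using sech_pos[of y] by (simp add: tanh_squared)
  ultimately have "sech y ^ 2 * tanh y ^ 2 \<le> 1"
    by (auto intro: mult_le_one)
  moreover have "0 \<le> sech y ^ 2 * tanh y ^ 2" "0 \<le> sech y ^ 4"
    by simp_all
  ultimately show ?thesis
    using \<open>sech y ^ 4 \<le> 1\<close> by (intro abs_leI) linarith+
qed

lemma sech_squared_tanh_lipschitz: "\<bar>- 2 * sech y ^ 2 * tanh y - (- 2 * sech z ^ 2 * tanh z)\<bar> \<le> 6 * \<bar>y - z\<bar>"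
proof -
  have "norm (- 2 * sech y ^ 2 * tanh y - (- 2 * sech z ^ 2 * tanh z)) \<le> 6 * norm (y - z)"
  proof (rule field_differentiable_bound[OF convex_UNIV, where f = "\<lambda>y. - 2 * sech y ^ 2 * tanh y"
        and f' = "\<lambda>y. 4 * sech y ^ 2 * tanh y ^ 2 - 2 * sech y ^ 4"])
    show "((\<lambda>y. - 2 * sech y ^ 2 * tanh y) has_field_derivative 4 * sech x ^ 2 * tanh x ^ 2 - 2 * sech x ^ 4)
        (at x within UNIV)" for x
      by (rule has_real_derivative_sech_squared_tanh)
  qed (simp_all add: abs_sech_squared_tanh_deriv_le)
  then show ?thesis
    by simp
qed

lemma abs_sech_power_le_1: "\<bar>sech y ^ k\<bar> \<le> 1"
  using sech_pos[of y] sech_le_1[of y] by (simp add: power_le_one)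

lemma abs_sech_squared_tanh_le: "\<bar>- 2 * sech y ^ 2 * tanh y\<bar> \<le> 2"
  using abs_sech_power_le_1[of y 2] abs_tanh_le_1[of y] by (simp add: abs_mult mult_le_one)

lemma T_has_real_derivative_convolve:
  "(T has_real_derivative convolve (\<lambda>u. exp (- sqrt 2 * \<bar>u\<bar>)) (\<lambda>y. - 2 * sech y ^ 2 * tanh y) x) (at x)"
  unfolding T_eq_convolve
proof (rule has_real_derivative_convolve[OF integrable_exp_neg_abs _ abs_sech_power_le_1
      abs_sech_squared_tanh_le sech_squared_tanh_lipschitz])
  show "((\<lambda>y. sech y ^ 2) has_real_derivative - 2 * sech y ^ 2 * tanh y) (at y)" for y
    using has_real_derivative_sech_power[of 2 y] by simp
qed simp

lemma deriv_T: "deriv T = convolve (\<lambda>u. exp (- sqrt 2 * \<bar>u\<bar>)) (\<lambda>y. - 2 * sech y ^ 2 * tanh y)"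
  using T_has_real_derivative_convolve by (intro ext DERIV_imp_deriv)

lemma has_real_derivative_T [derivative_intros]: "(T has_real_derivative deriv T x) (at x)"
  using T_has_real_derivative_convolve by (simp add: deriv_T)

lemma continuous_on_T [continuous_intros]: "continuous_on S T"
  by (rule continuous_at_imp_continuous_on) (use DERIV_isCont[OF has_real_derivative_T] in blast)

lemma continuous_on_deriv_T [continuous_intros]: "continuous_on S (deriv T)"
proof -
  have "continuous_on UNIV (deriv T)"
    unfolding deriv_T by (rule continuous_on_if_lipschitz[OF convolve_lipschitz[OF integrable_exp_neg_abs
          abs_sech_squared_tanh_le sech_squared_tanh_lipschitz]]) simp
  then show ?thesis
    by (rule continuous_on_subset) simp
qed

lemma bounded_range_T: "bounded (range T)"
proof -
  have "\<bar>T x\<bar> \<le> 1 * (LINT u|lborel. \<bar>exp (- sqrt 2 * \<bar>u\<bar>)\<bar>)" for x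
    unfolding T_eq_convolve
    by (rule abs_convolve_le[OF integrable_exp_neg_abs _ abs_sech_power_le_1]) (intro continuous_intros | simp add: cosh_real_nonzero)+
  then show ?thesis
    unfolding bounded_iff by (intro exI[of _ "1 * (LINT u|lborel. \<bar>exp (- sqrt 2 * \<bar>u\<bar>)\<bar>)"] ballI) clarsimp
qed

lemma bounded_range_deriv_T: "bounded (range (deriv T))"
proof -
  have "\<bar>deriv T x\<bar> \<le> 2 * (LINT u|lborel. \<bar>exp (- sqrt 2 * \<bar>u\<bar>)\<bar>)" for x
    unfolding deriv_T
    by (rule abs_convolve_le[OF integrable_exp_neg_abs _ abs_sech_squared_tanh_le]) (intro continuous_intros | simp add: cosh_real_nonzero)+
  then show ?thesis
    unfolding bounded_iff by (intro exI[of _ "2 * (LINT u|lborel. \<bar>exp (- sqrt 2 * \<bar>u\<bar>)\<bar>)"] ballI) clarsimp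
qed

lemma linear_growth_cos [simp]: "linear_growth cos"
  by (intro linear_growth_bounded continuous_intros bounded_range_cos)

lemma linear_growth_sin [simp]: "linear_growth sin"
  by (intro linear_growth_bounded continuous_intros bounded_range_sin)

lemma linear_growth_T [simp]: "linear_growth T"
  by (intro linear_growth_bounded continuous_intros bounded_range_T)

lemma linear_growth_deriv_T [simp]: "linear_growth (deriv T)"
  by (intro linear_growth_bounded continuous_intros bounded_range_deriv_T)

lemma continuous_on_UNIV_tanh_sin_cos [simp]:
  "continuous_on UNIV (tanh :: real \<Rightarrow> real)" "continuous_on UNIV (sin :: real \<Rightarrow> real)"
  "continuous_on UNIV (cos :: real \<Rightarrow> real)"
  by (intro continuous_intros; simp add: cosh_real_nonzero)+

lemma linear_growth_diff [simp]:
  assumes "linear_growth u" "linear_growth v"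
  shows "linear_growth (\<lambda>x. u x - v x)"
proof -
  obtain C D where "\<And>x. \<bar>u x\<bar> \<le> C * (1 + \<bar>x\<bar>)" "\<And>x. \<bar>v x\<bar> \<le> D * (1 + \<bar>x\<bar>)"
    "continuous_on UNIV u" "continuous_on UNIV v"
    using assms unfolding linear_growth_def by blast
  then have "\<bar>u x - v x\<bar> \<le> (C + D) * (1 + \<bar>x\<bar>)" "continuous_on UNIV (\<lambda>x. u x - v x)" for x
    by (auto simp: distrib_right intro: continuous_intros order_trans[OF abs_triangle_ineq4 add_mono])
  then show ?thesis
    unfolding linear_growth_def by blast
qed

lemma linear_growth_scale [simp]:
  assumes "linear_growth u"
  shows "linear_growth (\<lambda>x. c * u x)"
  using linear_growth_mult_bounded(2)[OF assms, of "\<lambda>_. c"] by simp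

lemma tanh_mult_tanh:
  "tanh x * tanh x = 1 - sech x * sech x" "tanh x * (tanh x * y) = y - sech x * (sech x * y)"
  using tanh_sech_squared_add[of x] unfolding power2_eq_square by algebra+

lemma has_real_derivative_sech_power_eq:
  "D = - real k * sech x ^ k * tanh x \<Longrightarrow> ((\<lambda>x. sech x ^ k) has_real_derivative D) (at x)"
  using has_real_derivative_sech_power by simp

lemma has_real_derivative_ln_sech_eq:
  "D = - tanh x \<Longrightarrow> ((\<lambda>x. ln (sech x)) has_real_derivative D) (at x)"
  using has_real_derivative_ln_sech by simp

lemma sech_integral_cos [simp]: "sech_integral k cos = pk k"
  and sech_integral_ln_sech_cos [simp]: "sech_integral k (\<lambda>x. ln (sech x) * cos x) = qk k"
  and sech_integral_T_cos [simp]: "sech_integral k (\<lambda>x. T x * cos x) = rk k"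
  and sech_integral_T_tanh_sin [simp]: "sech_integral k (\<lambda>x. T x * tanh x * sin x) = sk k"
  and sech_integral_ident_tanh_cos [simp]: "sech_integral k (\<lambda>x. x * tanh x * cos x) = ak k"
  by (simp_all add: sech_integral_def pk_def qk_def rk_def sk_def ak_def ac_simps)

lemmas sech_derivative_intros = has_real_derivative_sech_power_eq has_real_derivative_ln_sech_eq
  derivative_eq_intros refl cosh_real_nonzero has_real_derivative_T

lemma sech_integral_tanh_sin [simp]:
  assumes "k \<ge> 1"
  shows "sech_integral k (\<lambda>x. tanh x * sin x) = pk k / k"
proof -
  have "(\<Sum>(c, j, v)\<leftarrow>[(1, k, cos), (- real k, k, \<lambda>x. tanh x * sin x)]. c * sech_integral j v) = 0"
    by (rule sech_series_integral_eq_0[OF _ assms, where u = sin])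
      (use assms in \<open>simp_all\<close>, (rule sech_derivative_intros)+,
       simp add: power_add power2_eq_square tanh_mult_tanh algebra_simps)
  then show ?thesis
    using assms by (simp add: field_simps)
qed

lemma sech_integral_tanh_ln_sech_sin [simp]:
  assumes "k \<ge> 1"
  shows "sech_integral k (\<lambda>x. tanh x * ln (sech x) * sin x) = (qk k - pk k / k) / k"
proof -
  have "(\<Sum>(c, j, v)\<leftarrow>[(1, k, \<lambda>x. ln (sech x) * cos x), (- real k, k, \<lambda>x. tanh x * ln (sech x) * sin x),
      (- 1, k, \<lambda>x. tanh x * sin x)]. c * sech_integral j v) = 0"
    by (rule sech_series_integral_eq_0[OF _ assms, where u = "\<lambda>x. ln (sech x) * sin x"])
      (use assms in \<open>simp_all\<close>, (rule sech_derivative_intros)+,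
       simp add: power_add power2_eq_square tanh_mult_tanh algebra_simps)
  then show ?thesis
    using assms sech_integral_tanh_sin[OF assms] by simp (simp add: field_simps)
qed

lemma sech_integral_ident_sin [simp]:
  assumes "k \<ge> 1"
  shows "sech_integral k (\<lambda>x. x * sin x) = pk k - k * ak k"
proof -
  have "(\<Sum>(c, j, v)\<leftarrow>[(1, k, cos), (- real k, k, \<lambda>x. x * tanh x * cos x), (- 1, k, \<lambda>x. x * sin x)].
      c * sech_integral j v) = 0"
    by (rule sech_series_integral_eq_0[OF _ assms, where u = "\<lambda>x. x * cos x"])
      (use assms in \<open>simp_all\<close>, (rule sech_derivative_intros)+,
       simp add: power_add power2_eq_square tanh_mult_tanh algebra_simps)
  then show ?thesis
    by simp
qed

lemma pk_recurrence:
  assumes "k \<ge> 1"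
  shows "(real k ^ 2 + 1) * pk k = real k * (real k + 1) * pk (k + 2)"
proof -
  have "(\<Sum>(c, j, v)\<leftarrow>[(real k ^ 2 + 1, k, cos), (- real k * (real k + 1), k + 2, cos)].
      c * sech_integral j v) = 0"
    by (rule sech_series_integral_eq_0[OF _ assms, where u = "\<lambda>x. sin x - real k * (tanh x * cos x)"])
      (use assms in \<open>simp_all\<close>, (rule sech_derivative_intros)+,
       simp add: power_add power2_eq_square tanh_mult_tanh algebra_simps)
  then show ?thesis
    by simp
qed

lemma qk_recurrence:
  assumes "k \<ge> 1"
  shows "(real k ^ 2 + 1) * qk k - real k * (real k + 1) * qk (k + 2) + real k * (pk k - pk (k + 2))
    = pk k / k"
proof -
  have "(\<Sum>(c, j, v)\<leftarrow>[(real k ^ 2 + 1, k, \<lambda>x. ln (sech x) * cos x),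
      (- real k * (real k + 1), k + 2, \<lambda>x. ln (sech x) * cos x), (real k, k, cos), (- real k, k + 2, cos),
      (- 1, k, \<lambda>x. tanh x * sin x)]. c * sech_integral j v) = 0"
    by (rule sech_series_integral_eq_0[OF _ assms,
          where u = "\<lambda>x. ln (sech x) * sin x - real k * (tanh x * (ln (sech x) * cos x))"])
      (use assms in \<open>simp_all\<close>, (rule sech_derivative_intros)+,
       simp add: power_add power2_eq_square tanh_mult_tanh algebra_simps)
  then show ?thesis
    using sech_integral_tanh_sin[OF assms] by simp (simp add: algebra_simps)
qed

lemma sech_integral_deriv_T_tanh_cos [simp]:
  assumes "k \<ge> 1"
  shows "sech_integral k (\<lambda>x. deriv T x * tanh x * cos x) = k * rk k - (k + 1) * rk (k + 2) + sk k"
proof -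
  have "(\<Sum>(c, j, v)\<leftarrow>[(- real k, k, \<lambda>x. T x * cos x), (real k + 1, k + 2, \<lambda>x. T x * cos x),
      (1, k, \<lambda>x. deriv T x * tanh x * cos x), (- 1, k, \<lambda>x. T x * tanh x * sin x)]. c * sech_integral j v) = 0"
    by (rule sech_series_integral_eq_0[OF _ assms, where u = "\<lambda>x. T x * tanh x * cos x"])
      (use assms in \<open>simp_all\<close>, (rule sech_derivative_intros)+,
       simp add: power_add power2_eq_square tanh_mult_tanh algebra_simps)
  then show ?thesis
    by simp
qed

lemma sech_integral_deriv_T_sin [simp]:
  assumes "k \<ge> 1"
  shows "sech_integral k (\<lambda>x. deriv T x * sin x) = k * sk k - rk k"
proof -
  have "(\<Sum>(c, j, v)\<leftarrow>[(- real k, k, \<lambda>x. T x * tanh x * sin x), (1, k, \<lambda>x. deriv T x * sin x),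
      (1, k, \<lambda>x. T x * cos x)]. c * sech_integral j v) = 0"
    by (rule sech_series_integral_eq_0[OF _ assms, where u = "\<lambda>x. T x * sin x"])
      (use assms in \<open>simp_all\<close>, (rule sech_derivative_intros)+,
       simp add: power_add power2_eq_square tanh_mult_tanh algebra_simps)
  then show ?thesis
    by simp
qed

lemma deriv_phi3: "deriv phi3 x = - sqrt 2 * sech x * tanh x"
proof -
  have "(phi3 has_real_derivative - sqrt 2 * sech x * tanh x) (at x)"
    unfolding phi3_def [abs_def] by (auto intro!: derivative_eq_intros)
  then show ?thesis
    by (rule DERIV_imp_deriv)
qed

lemma deriv_phi3_div_phi3: "deriv phi3 x / phi3 x = - tanh x"
  by (simp add: deriv_phi3 phi3_def)

lemma phi3_squared: "(phi3 x)\<^sup>2 = 2 * (sech x)\<^sup>2"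
  by (simp add: phi3_def power_mult_distrib)

lemma ln_phi3: "ln (phi3 x) = ln 2 / 2 + ln (sech x)"
  using sech_pos[of x] by (simp add: phi3_def ln_mult ln_sqrt)

lemma sqrt_2_mult_sqrt_2: "sqrt 2 * (sqrt 2 * y) = 2 * y"
  by (simp flip: mult.assoc)

lemma R1_eq:
  "R1 x = 2 * x * (sech x)\<^sup>2 * tanh x - sqrt 2 / 8 * (3 - 2 * (sech x)\<^sup>2) * T x + sqrt 2 / 4 * tanh x * deriv T x"
  unfolding R1_def deriv_phi3 phi3_def
  by (simp add: field_simps power2_eq_square) (simp add: sqrt_2_mult_sqrt_2 algebra_simps)

lemma R2_eq: "R2 x = (sech x)\<^sup>2 + 3 * sqrt 2 / 8 * T x - sqrt 2 / 4 * tanh x * deriv T x"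
  unfolding R2_def phi3_squared deriv_phi3 phi3_def
  by (simp add: field_simps power2_eq_square)

lemma E_eq: "E x = sqrt 2 / 2 * sech x * (1/4 - ln 2 / 2 - ln (sech x)) - sqrt 2 / 2 * x * sech x * tanh x"
  unfolding E_def ln_phi3 deriv_phi3 by (simp add: phi3_def algebra_simps)

lemma F_eq: "F x = sqrt 2 / 2 * sech x * (1/4 + ln 2 / 2 + ln (sech x)) - sqrt 2 / 2 * x * sech x * tanh x"
  unfolding F_def E_eq ln_phi3 by (simp add: phi3_def algebra_simps)

lemma h31_eq: "h31 x = (sech x)\<^sup>2 * cos x - tanh x * sin x"
  unfolding h31_def phi3_squared deriv_phi3_div_phi3 by simp

lemma h32_eq: "h32 x = - tanh x * sin x"
  unfolding h32_def deriv_phi3_div_phi3 by simp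

lemma ip_eq_sech_series:
  assumes "admissible L" "\<And>x. f x * g x = sech_series L x"
  shows "ip f g = (\<Sum>(c, k, v)\<leftarrow>L. c * sech_integral k v)"
  using integral_sech_series[OF assms(1)] by (simp add: ip_def assms(2))

lemma E_h31_expansion:
  "E x * h31 x = sech_series
    [((ln 2 / 4 - 1 / 8) * sqrt 2, 1, \<lambda>x. tanh x * sin x),
     (sqrt 2 / 2, 1, \<lambda>x. tanh x * ln (sech x) * sin x),
     ((1 / 8 - ln 2 / 4) * sqrt 2, 3, cos),
     (- sqrt 2 / 2, 3, \<lambda>x. ln (sech x) * cos x),
     (sqrt 2 / 2, 1, \<lambda>x. x * sin x),
     (- sqrt 2 / 2, 3, \<lambda>x. x * sin x),
     (- sqrt 2 / 2, 3, \<lambda>x. x * tanh x * cos x)] x"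
  unfolding E_eq h31_eq using tanh_sech_squared_add[of x]
  apply (simp add: field_simps)
  apply algebra
  done

lemma pk_3_5_7: "pk 3 = pk 1" "pk 5 = 5 / 6 * pk 1" "pk 7 = 13 / 18 * pk 1"
  using pk_recurrence[of 1] pk_recurrence[of 3] pk_recurrence[of 5] by (simp_all add: numeral_eq_Suc)

lemma qk_3_5_7:
  "qk 3 = qk 1 - pk 1 / 2"
  "qk 5 = (10 * qk 3 + 3 * (pk 3 - pk 5) - pk 3 / 3) / 12"
  "qk 7 = (26 * qk 5 + 5 * (pk 5 - pk 7) - pk 5 / 5) / 30"
  using qk_recurrence[of 1] qk_recurrence[of 3] qk_recurrence[of 5] pk_3_5_7
  by (simp_all add: numeral_eq_Suc field_simps)

lemma gamma4_eq: "gamma4 = sqrt 2 * (qk 1 - qk 3 + ak 1 - 2 * ak 3)"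
  using ip_eq_sech_series[OF _ E_h31_expansion]
  apply (simp add: gamma4_def)
  apply (simp add: pk_3_5_7 qk_3_5_7 field_simps)
  done

lemma gamma3_integrand_h31_expansion:
  "(6 * x * tanh x * (sech x)\<^sup>2 - 7/2 * (sech x)\<^sup>2) * phi3 x * (1 - (phi3 x)\<^sup>2) * h31 x = sech_series
    [(7 / 2 * sqrt 2, 3, \<lambda>x. tanh x * sin x),
     (- 7 / 2 * sqrt 2, 5, cos),
     (- 7 * sqrt 2, 5, \<lambda>x. tanh x * sin x),
     (7 * sqrt 2, 7, cos),
     (- 6 * sqrt 2, 3, \<lambda>x. x * sin x),
     (18 * sqrt 2, 5, \<lambda>x. x * sin x),
     (6 * sqrt 2, 5, \<lambda>x. x * tanh x * cos x),
     (- 12 * sqrt 2, 7, \<lambda>x. x * sin x),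
     (- 12 * sqrt 2, 7, \<lambda>x. x * tanh x * cos x)] x"
  unfolding h31_eq phi3_squared unfolding phi3_def using tanh_sech_squared_add[of x]
  apply (simp add: field_simps)
  apply algebra
  done

lemma Delta2_h32_expansion:
  "Delta2 x * h32 x = sech_series
    [((- 1 / 8 - ln 2 / 4) * sqrt 2, 1, \<lambda>x. tanh x * sin x),
     (- sqrt 2 / 2, 1, \<lambda>x. tanh x * ln (sech x) * sin x),
     (- 1, 3, \<lambda>x. deriv T x * sin x),
     ((- 3 / 4 + ln 2 / 2) * sqrt 2, 3, \<lambda>x. tanh x * sin x),
     (1, 3, \<lambda>x. T x * tanh x * sin x),
     (sqrt 2, 3, \<lambda>x. tanh x * ln (sech x) * sin x),
     (1, 5, \<lambda>x. deriv T x * sin x),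
     (2 * sqrt 2, 5, \<lambda>x. tanh x * sin x),
     (sqrt 2 / 2, 1, \<lambda>x. x * sin x),
     (- 7 / 2 * sqrt 2, 3, \<lambda>x. x * sin x),
     (3 * sqrt 2, 5, \<lambda>x. x * sin x)] x"
  unfolding Delta2_def h32_eq phi3_squared F_eq R1_eq R2_eq unfolding phi3_def using tanh_sech_squared_add[of x]
  apply (simp add: field_simps)
  apply (use sqrt_2_mult_sqrt_2[of 1] in algebra)
  done

lemma gamma3_eq:
  "gamma3 = sqrt 2 * (- 33/2 * pk 3 + 127/2 * pk 5 - 47 * pk 7 + 18 * ak 3 - 84 * ak 5 + 72 * ak 7)"
  using ip_eq_sech_series[OF _ gamma3_integrand_h31_expansion]
  apply (simp add: gamma3_def)
  apply (simp add: pk_3_5_7 qk_3_5_7 field_simps)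
  done

lemma gamma2_eq:
  "gamma2 =
      sqrt 2 * ((1/2 * ln 2 + 9/4) * pk 1 + (- 4 * ln 2 - 6) * pk 3 + (4 * ln 2 - 18) * pk 5
                + 24 * pk 7)
    + sqrt 2 * (qk 1 - 8 * qk 3 + 8 * qk 5 - ak 1 + 21 * ak 3 - 30 * ak 5)
    + 2 * rk 3 - 2 * rk 5 - 4 * sk 3 + 10 * sk 5"
  using ip_eq_sech_series[OF _ Delta2_h32_expansion]
  apply (simp add: gamma2_def)
  apply (simp add: pk_3_5_7 qk_3_5_7 field_simps)
  done

lemma Delta1_h31_expansion:
  "Delta1 x * h31 x = sech_series
    [(- 4, 1, \<lambda>x. deriv T x * sin x),
     ((- 5 / 4 - ln 2 / 2) * sqrt 2, 1, \<lambda>x. tanh x * sin x),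
     (6, 1, \<lambda>x. T x * tanh x * sin x),
     (- sqrt 2, 1, \<lambda>x. tanh x * ln (sech x) * sin x),
     (10, 3, \<lambda>x. deriv T x * sin x),
     ((5 / 4 + ln 2 / 2) * sqrt 2, 3, cos),
     (- 6, 3, \<lambda>x. T x * cos x),
     (sqrt 2, 3, \<lambda>x. ln (sech x) * cos x),
     ((15 / 2 + 3 * ln 2) * sqrt 2, 3, \<lambda>x. tanh x * sin x),
     (- 12, 3, \<lambda>x. T x * tanh x * sin x),
     (6 * sqrt 2, 3, \<lambda>x. tanh x * ln (sech x) * sin x),
     (4, 3, \<lambda>x. deriv T x * tanh x * cos x),
     (- 6, 5, \<lambda>x. deriv T x * sin x),
     ((- 15 / 2 - 3 * ln 2) * sqrt 2, 5, cos),
     (12, 5, \<lambda>x. T x * cos x),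
     (- 6 * sqrt 2, 5, \<lambda>x. ln (sech x) * cos x),
     ((- 11 / 2 - 3 * ln 2) * sqrt 2, 5, \<lambda>x. tanh x * sin x),
     (6, 5, \<lambda>x. T x * tanh x * sin x),
     (- 6 * sqrt 2, 5, \<lambda>x. tanh x * ln (sech x) * sin x),
     (- 6, 5, \<lambda>x. deriv T x * tanh x * cos x),
     ((11 / 2 + 3 * ln 2) * sqrt 2, 7, cos),
     (- 6, 7, \<lambda>x. T x * cos x),
     (6 * sqrt 2, 7, \<lambda>x. ln (sech x) * cos x),
     (sqrt 2, 1, \<lambda>x. x * sin x),
     (- 19 * sqrt 2, 3, \<lambda>x. x * sin x),
     (- sqrt 2, 3, \<lambda>x. x * tanh x * cos x),
     (48 * sqrt 2, 5, \<lambda>x. x * sin x),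
     (18 * sqrt 2, 5, \<lambda>x. x * tanh x * cos x),
     (- 30 * sqrt 2, 7, \<lambda>x. x * sin x),
     (- 30 * sqrt 2, 7, \<lambda>x. x * tanh x * cos x)] x"
  unfolding Delta1_def h31_eq phi3_squared F_eq R1_eq R2_eq unfolding phi3_def using tanh_sech_squared_add[of x]
  apply (simp add: field_simps)
  apply (use sqrt_2_mult_sqrt_2[of 1] in algebra)
  done

lemma gamma1_eq:
  "gamma1 =
      sqrt 2 * (2 * pk 1 + (- 9 * ln 2 - 97/2) * pk 3 + (24 * ln 2 + 110) * pk 5
                + (- 15 * ln 2 - 127/2) * pk 7)
    + sqrt 2 * (qk 1 - 19 * qk 3 + 48 * qk 5 - 30 * qk 7
                - ak 1 + 56 * ak 3 - 222 * ak 5 + 180 * ak 7)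
    + 4 * rk 1 - 4 * rk 3 - 28 * rk 5 + 30 * rk 7 + 2 * sk 1 + 22 * sk 3 - 30 * sk 5"
  using ip_eq_sech_series[OF _ Delta1_h31_expansion]
  apply (simp add: gamma1_def)
  apply (simp add: pk_3_5_7 qk_3_5_7 field_simps)
  done

theorem lemma2p20:
  shows "(gamma1 =
      sqrt 2 * (2 * pk 1 + (- 9 * ln 2 - 97/2) * pk 3 + (24 * ln 2 + 110) * pk 5
                + (- 15 * ln 2 - 127/2) * pk 7)
    + sqrt 2 * (qk 1 - 19 * qk 3 + 48 * qk 5 - 30 * qk 7
                - ak 1 + 56 * ak 3 - 222 * ak 5 + 180 * ak 7)
    + 4 * rk 1 - 4 * rk 3 - 28 * rk 5 + 30 * rk 7 + 2 * sk 1 + 22 * sk 3 - 30 * sk 5) \<and>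
    (gamma2 =
      sqrt 2 * ((1/2 * ln 2 + 9/4) * pk 1 + (- 4 * ln 2 - 6) * pk 3 + (4 * ln 2 - 18) * pk 5
                + 24 * pk 7)
    + sqrt 2 * (qk 1 - 8 * qk 3 + 8 * qk 5 - ak 1 + 21 * ak 3 - 30 * ak 5)
    + 2 * rk 3 - 2 * rk 5 - 4 * sk 3 + 10 * sk 5) \<and>
    (gamma3 =
      sqrt 2 * (- 33/2 * pk 3 + 127/2 * pk 5 - 47 * pk 7 + 18 * ak 3 - 84 * ak 5 + 72 * ak 7)) \<and>
    (gamma4 = sqrt 2 * (qk 1 - qk 3 + ak 1 - 2 * ak 3))"
  using gamma1_eq gamma2_eq gamma3_eq gamma4_eq by blast

end
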